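(* Let $1\le p<\infty$, let $f$ be a function on $[0,1]$, let $0=x_0<x_1<\dots<x_M=1$, and let $g_M$ be the piecewise linear function interpolating $f$ at the points $(x_i,f(x_i))$, $0\le i\le M$. Then $\mathrm{Var}_p(g_M)\le\upsilon_p(M,f)$.
   Context: For $h$ on $[0,1]$ and $I$ an interval, $h(I)=h(\sup I)-h(\inf I)$. $\upsilon_p(n,f)=\sup(\sum_{j=1}^n|f(I_j)|^p)^{1/p}$ over collections of $n$ nonoverlapping subintervals of $[0,1]$. $\mathrm{Var}_p(g)=\sup(\sum_j|g(I_j)|^p)^{1/p}$ over all finite collections of nonoverlapping subintervals of $[0,1]$. *)

theory Defs
  imports Complex_Main "HOL-Library.Extended_Real"
begin

definition nonoverlapping :: "nat \<Rightarrow> (nat \<Rightarrow> real) \<Rightarrow> (nat \<Rightarrow> real) \<Rightarrow> bool" where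
  "nonoverlapping n a b \<longleftrightarrow>
     (\<forall>j<n. 0 \<le> a j \<and> a j \<le> b j \<and> b j \<le> 1) \<and>
     (\<forall>i<n. \<forall>j<n. i \<noteq> j \<longrightarrow> {a i<..<b i} \<inter> {a j<..<b j} = {})"

definition pvar_sum :: "real \<Rightarrow> (real \<Rightarrow> real) \<Rightarrow> nat \<Rightarrow> (nat \<Rightarrow> real) \<Rightarrow> (nat \<Rightarrow> real) \<Rightarrow> real" where
  "pvar_sum p h n a b = (\<Sum>j<n. \<bar>h (b j) - h (a j)\<bar> powr p) powr (1 / p)"

definition upsilon :: "real \<Rightarrow> nat \<Rightarrow> (real \<Rightarrow> real) \<Rightarrow> ereal" where
  "upsilon p n f = (SUP ab \<in> {(a, b). nonoverlapping n a b}. ereal (pvar_sum p f n (fst ab) (snd ab)))"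

definition Var_p :: "real \<Rightarrow> (real \<Rightarrow> real) \<Rightarrow> ereal" where
  "Var_p p g = (SUP nab \<in> {(n, a, b). nonoverlapping n a b}.
       ereal (case nab of (n, a, b) \<Rightarrow> pvar_sum p g n a b))"

end

theory Submission
  imports Defs "HOL-Probability.Probability_Measure"
begin

text \<open>Randomized rounding. For a parameter u \<in> [0,1), round a point t of the cell
  [x i, x (i+1)] up to x (i+1) if t lies beyond the threshold x i + u (x (i+1) - x i), and down
  to x i otherwise. For fixed u this rounding is monotone and takes only the M+1 values x i, so it
  turns a nonoverlapping family into one with at most M nondegenerate intervals, on which the
  p-variation sum of f is bounded by upsilon p M f. For u uniformly distributed, the expected value
  of f at the rounded point is exactly g t; Jensen's inequality for the convex function
  \<bar>y\<bar> powr p then transfers the bound from the rounded families to g.\<close>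

lemma convex_on_comp_abs:
  fixes g :: "real \<Rightarrow> real"
  assumes "convex_on {0..} g" and "mono_on {0..} g"
  shows "convex_on UNIV (\<lambda>y. g \<bar>y\<bar>)"
proof (rule convex_onI)
  fix t y z :: real
  assume t: "0 < t" "t < 1"
  have "g \<bar>(1 - t) * y + t * z\<bar> \<le> g ((1 - t) * \<bar>y\<bar> + t * \<bar>z\<bar>)"
    using t by (intro mono_onD[OF assms(2)])
      (auto intro: order.trans[OF abs_triangle_ineq] simp: abs_mult)
  also have "\<dots> \<le> (1 - t) * g \<bar>y\<bar> + t * g \<bar>z\<bar>"
    using convex_onD[OF assms(1), of t "\<bar>y\<bar>" "\<bar>z\<bar>"] t by simp
  finally show "g \<bar>(1 - t) *\<^sub>R y + t *\<^sub>R z\<bar> \<le> (1 - t) * g \<bar>y\<bar> + t * g \<bar>z\<bar>"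
    by simp
qed simp

lemma convex_on_powr_nonneg:
  fixes p :: real
  assumes "1 \<le> p"
  shows "convex_on {0..} (\<lambda>x. x powr p)"
proof (rule convex_on_linorderI)
  fix t x y :: real
  assume t: "0 < t" "t < 1" and xy: "x \<in> {0..}" "y \<in> {0..}" "x < y"
  show "((1 - t) *\<^sub>R x + t *\<^sub>R y) powr p \<le> (1 - t) * x powr p + t * y powr p"
  proof (cases "x = 0")
    case True
    have "(t * y) powr p = t powr p * y powr p"
      using t xy by (simp add: powr_mult)
    also have "\<dots> \<le> t * y powr p"
      using powr_mono'[of 1 p t] assms t by (intro mult_right_mono) auto
    finally show ?thesis
      using True assms by simp
  next
    case False
    then show ?thesis
      using convex_onD[OF powr_convex[OF assms], of t x y] t xy by simp
  qed
qed simp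

lemma convex_on_abs_powr:
  fixes p :: real
  assumes "1 \<le> p"
  shows "convex_on UNIV (\<lambda>y. \<bar>y\<bar> powr p)"
  using assms by (intro convex_on_comp_abs convex_on_powr_nonneg)
    (auto simp: monotone_on_def intro: powr_mono2)

lemma pvar_sum_nonneg: "0 \<le> pvar_sum p h n a b"
  by (simp add: pvar_sum_def)

lemma pvar_sum_le_iff:
  assumes "0 < p" and "0 \<le> V"
  shows "pvar_sum p h n a b \<le> V \<longleftrightarrow> (\<Sum>j<n. \<bar>h (b j) - h (a j)\<bar> powr p) \<le> V powr p"
proof -
  define S where "S = (\<Sum>j<n. \<bar>h (b j) - h (a j)\<bar> powr p)"
  have "S \<ge> 0"
    by (simp add: S_def sum_nonneg)
  have "S powr (1 / p) \<le> V \<longleftrightarrow> S \<le> V powr p"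
  proof
    assume "S powr (1 / p) \<le> V"
    then have "(S powr (1 / p)) powr p \<le> V powr p"
      using assms by (intro powr_mono2) auto
    then show "S \<le> V powr p"
      using \<open>S \<ge> 0\<close> assms by (simp add: powr_powr)
  next
    assume "S \<le> V powr p"
    then have "S powr (1 / p) \<le> (V powr p) powr (1 / p)"
      using \<open>S \<ge> 0\<close> assms by (intro powr_mono2) auto
    then show "S powr (1 / p) \<le> V"
      using assms by (simp add: powr_powr)
  qed
  then show ?thesis
    by (simp add: pvar_sum_def S_def)
qed

lemma pvar_sum_expectation_le:
  fixes P :: "'u measure" and h :: "'u \<Rightarrow> real \<Rightarrow> real"
  assumes "prob_space P" and p: "1 \<le> p"
    and ends: "\<And>j. j < n \<Longrightarrow> a j \<in> T \<and> b j \<in> T"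
    and meas: "\<And>t. t \<in> T \<Longrightarrow> (\<lambda>u. h u t) \<in> borel_measurable P"
    and bound: "\<And>u t. u \<in> space P \<Longrightarrow> t \<in> T \<Longrightarrow> \<bar>h u t\<bar> \<le> C"
    and mean: "\<And>t. t \<in> T \<Longrightarrow> g t = (\<integral>u. h u t \<partial>P)"
    and le: "\<And>u. u \<in> space P \<Longrightarrow> pvar_sum p (h u) n a b \<le> V"
  shows "pvar_sum p g n a b \<le> V"
proof -
  interpret prob_space P by fact
  obtain u0 where "u0 \<in> space P"
    using not_empty by blast
  then have "0 \<le> V"
    using le pvar_sum_nonneg order.trans by metis
  define q where "q y = \<bar>y\<bar> powr p" for y :: real
  define X where "X j u = h u (b j) - h u (a j)" for j u
  have X_meas: "X j \<in> borel_measurable P" if "j < n" for j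
    unfolding X_def using meas ends[OF that] by (intro borel_measurable_diff) auto
  have X_bound: "\<bar>X j u\<bar> \<le> 2 * C" if "j < n" "u \<in> space P" for j u
    using bound[of u "a j"] bound[of u "b j"] ends[OF that(1)] that(2)
    unfolding X_def by linarith
  have X_int: "integrable P (X j)" if "j < n" for j
    using X_meas X_bound that by (intro integrable_const_bound[where B="2 * C"]) auto
  have qX_int: "integrable P (\<lambda>u. q (X j u))" if "j < n" for j
  proof (rule integrable_const_bound[where B="(2 * C) powr p"])
    show "AE u in P. norm (q (X j u)) \<le> (2 * C) powr p"
      using X_bound that p by (auto simp: q_def intro!: powr_mono2)
  qed (use X_meas that in \<open>simp add: q_def\<close>)
  have mean_X: "g (b j) - g (a j) = expectation (X j)" if "j < n" for j
  proof -
    have "integrable P (\<lambda>u. h u t)" if "t \<in> T" for t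
      using meas bound that by (intro integrable_const_bound[where B=C]) auto
    then show ?thesis
      using ends[OF that] mean unfolding X_def by (simp add: Bochner_Integration.integral_diff)
  qed
  have "(\<Sum>j<n. \<bar>g (b j) - g (a j)\<bar> powr p) = (\<Sum>j<n. q (expectation (X j)))"
    by (simp add: mean_X q_def)
  also have "\<dots> \<le> (\<Sum>j<n. expectation (\<lambda>u. q (X j u)))"
    using X_int qX_int convex_on_abs_powr[OF p]
    by (intro sum_mono jensens_inequality[where I=UNIV]) (auto simp: q_def)
  also have "\<dots> = expectation (\<lambda>u. \<Sum>j<n. q (X j u))"
    using qX_int by (simp add: Bochner_Integration.integral_sum)
  also have "\<dots> \<le> expectation (\<lambda>u. V powr p)"
  proof (rule integral_mono)
    show "(\<Sum>j<n. q (X j u)) \<le> V powr p" if "u \<in> space P" for u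
      using le[OF that] pvar_sum_le_iff[of p V] p \<open>0 \<le> V\<close> by (simp add: q_def X_def)
  qed (use qX_int in auto)
  also have "\<dots> = V powr p"
    by (simp add: prob_space)
  finally show ?thesis
    using pvar_sum_le_iff[of p V] p \<open>0 \<le> V\<close> by simp
qed

lemma nonoverlappingD:
  assumes "nonoverlapping n a b"
  shows "\<And>j. j < n \<Longrightarrow> a j \<in> {0..1} \<and> b j \<in> {0..1} \<and> a j \<le> b j"
    and "\<And>i j. i < n \<Longrightarrow> j < n \<Longrightarrow> i \<noteq> j \<Longrightarrow>
           b i \<le> a i \<or> b j \<le> a j \<or> b i \<le> a j \<or> b j \<le> a i"
  using assms unfolding nonoverlapping_def by (auto simp: min_le_iff_disj le_max_iff_disj)

lemma nonoverlapping_monotone_image: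
  assumes nov: "nonoverlapping n a b" and mono: "mono_on {0..1} \<phi>"
    and range: "\<phi> ` {0..1} \<subseteq> {0..1}"
  shows "nonoverlapping n (\<lambda>j. \<phi> (a j)) (\<lambda>j. \<phi> (b j))"
  unfolding nonoverlapping_def
proof (rule conjI; intro allI impI)
  fix j
  assume "j < n"
  then show "0 \<le> \<phi> (a j) \<and> \<phi> (a j) \<le> \<phi> (b j) \<and> \<phi> (b j) \<le> 1"
    using nonoverlappingD(1)[OF nov] range by (auto simp: image_subset_iff intro: mono_onD[OF mono])
next
  fix i j
  assume "i < n" "j < n" "i \<noteq> j"
  then have "b i \<le> a i \<or> b j \<le> a j \<or> b i \<le> a j \<or> b j \<le> a i"
    and "a i \<in> {0..1}" "b i \<in> {0..1}" "a j \<in> {0..1}" "b j \<in> {0..1}"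
    using nonoverlappingD[OF nov] by blast+
  then have "\<phi> (b i) \<le> \<phi> (a i) \<or> \<phi> (b j) \<le> \<phi> (a j) \<or> \<phi> (b i) \<le> \<phi> (a j) \<or> \<phi> (b j) \<le> \<phi> (a i)"
    by (elim disjE) (auto intro: mono_onD[OF mono])
  then show "{\<phi> (a i)<..<\<phi> (b i)} \<inter> {\<phi> (a j)<..<\<phi> (b j)} = {}"
    by auto
qed

lemma card_nondegenerate_le:
  assumes nov: "nonoverlapping n a b" and "finite G"
    and G: "\<And>j. j < n \<Longrightarrow> a j \<in> G \<and> b j \<in> G"
  shows "card {j. j < n \<and> a j < b j} \<le> card G - 1"
proof -
  let ?J = "{j. j < n \<and> a j < b j}"
  have "inj_on a ?J"
  proof (rule inj_onI, rule ccontr)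
    fix i j
    assume "i \<in> ?J" "j \<in> ?J" "a i = a j" "i \<noteq> j"
    then show False
      using nonoverlappingD(2)[OF nov, of i j] by auto
  qed
  moreover have "a ` ?J \<subseteq> G - {Max G}"
  proof
    fix y
    assume "y \<in> a ` ?J"
    then obtain j where "j < n" "a j < b j" "y = a j"
      by blast
    then show "y \<in> G - {Max G}"
      using G[OF \<open>j < n\<close>] Max_ge[OF \<open>finite G\<close>, of "b j"] by auto
  qed
  ultimately have "card ?J \<le> card (G - {Max G})"
    using \<open>finite G\<close> by (intro card_inj_on_le) auto
  then show ?thesis
    using Max_in[OF \<open>finite G\<close>] by (cases "G = {}") (auto simp: card_Diff_singleton_if)
qed

lemma pvar_sum_le_upsilon:
  assumes nov: "nonoverlapping n a b" and few: "card {j. j < n \<and> a j < b j} \<le> M"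
  shows "ereal (pvar_sum p f n a b) \<le> upsilon p M f"
proof -
  define J where "J = {j. j < n \<and> a j < b j}"
  obtain \<sigma> where \<sigma>: "bij_betw \<sigma> {..<card J} J"
    using ex_bij_betw_nat_finite[of J] by (auto simp: J_def atLeast0LessThan)
  have \<sigma>J: "\<sigma> m \<in> J" if "m < card J" for m
    using \<sigma> that by (auto dest: bij_betwE)
  define a' where "a' m = (if m < card J then a (\<sigma> m) else 0)" for m
  define b' where "b' m = (if m < card J then b (\<sigma> m) else 0)" for m
  have "nonoverlapping M a' b'"
    unfolding nonoverlapping_def
  proof (rule conjI; intro allI impI)
    fix m :: nat
    show "0 \<le> a' m \<and> a' m \<le> b' m \<and> b' m \<le> 1"
      using nonoverlappingD(1)[OF nov] \<sigma>J by (auto simp: a'_def b'_def J_def)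
  next
    fix m m' :: nat
    assume "m \<noteq> m'"
    show "{a' m<..<b' m} \<inter> {a' m'<..<b' m'} = {}"
    proof (cases "m < card J \<and> m' < card J")
      case True
      then have "\<sigma> m \<noteq> \<sigma> m'"
        using \<sigma> \<open>m \<noteq> m'\<close> by (auto dest: bij_betw_imp_inj_on inj_onD)
      moreover have "\<sigma> m < n" "\<sigma> m' < n"
        using True \<sigma>J by (auto simp: J_def)
      ultimately show ?thesis
        using True nov unfolding nonoverlapping_def a'_def b'_def by simp
    qed (auto simp: a'_def b'_def)
  qed
  moreover have "pvar_sum p f n a b = pvar_sum p f M a' b'"
  proof -
    define F where "F j = \<bar>f (b j) - f (a j)\<bar> powr p" for j
    have "a j = b j" if "j \<in> {..<n} - J" for j
      using nonoverlappingD(1)[OF nov] that by (force simp: J_def)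
    then have "(\<Sum>j<n. F j) = (\<Sum>j\<in>J. F j)"
      by (intro sum.mono_neutral_right) (auto simp: J_def F_def simp del: Diff_iff)
    also have "\<dots> = (\<Sum>m<card J. F (\<sigma> m))"
      using sum.reindex_bij_betw[OF \<sigma>, of F] by simp
    also have "\<dots> = (\<Sum>m<M. \<bar>f (b' m) - f (a' m)\<bar> powr p)"
      using few by (intro sum.mono_neutral_cong_left) (auto simp: J_def a'_def b'_def F_def)
    finally show ?thesis
      by (simp add: pvar_sum_def F_def)
  qed
  ultimately show ?thesis
    unfolding upsilon_def by (intro SUP_upper2[where i="(a', b')"]) auto
qed

lemma pvar_sum_comp_monotone_le_upsilon:
  assumes nov: "nonoverlapping n a b" and mono: "mono_on {0..1} \<phi>"
    and range: "\<phi> ` {0..1} \<subseteq> G" and G: "G \<subseteq> {0..1}" "finite G" "card G \<le> Suc M"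
  shows "ereal (pvar_sum p (f \<circ> \<phi>) n a b) \<le> upsilon p M f"
proof -
  have nov': "nonoverlapping n (\<lambda>j. \<phi> (a j)) (\<lambda>j. \<phi> (b j))"
    using range G(1) by (intro nonoverlapping_monotone_image[OF nov mono]) simp
  have "card {j. j < n \<and> \<phi> (a j) < \<phi> (b j)} \<le> card G - 1"
    using nonoverlappingD(1)[OF nov] range
    by (intro card_nondegenerate_le[OF nov' G(2)]) (simp add: image_subset_iff)
  then have "ereal (pvar_sum p f n (\<lambda>j. \<phi> (a j)) (\<lambda>j. \<phi> (b j))) \<le> upsilon p M f"
    using G(3) by (intro pvar_sum_le_upsilon[OF nov']) simp
  then show ?thesis
    by (simp add: pvar_sum_def)
qed

lemma integral_uniform_step:
  fixes A B l :: real
  assumes "l \<in> {0..1}"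
  shows "(\<integral>u. (if u < l then A else B) \<partial>uniform_measure lborel {0..<1}) = B + (A - B) * l"
proof -
  let ?U = "uniform_measure lborel {0..<1::real}"
  interpret prob_space ?U
    by (intro prob_space_uniform_measure) auto
  have "(\<lambda>u. if u < l then A else B) = (\<lambda>u. B + (A - B) * indicator {..<l} u)"
    by (auto simp: indicator_def)
  moreover have "integrable ?U (indicator {..<l} :: real \<Rightarrow> real)"
    by (intro integrable_const_bound[where B=1]) auto
  moreover have "measure ?U {..<l} = l"
  proof -
    have "{0..<1} \<inter> {..<l} = {0..<l}"
      using assms by auto
    then show ?thesis
      using assms by simp
  qed
  ultimately show ?thesis
    by simp
qed

lemma ex_cell_containing:
  fixes x :: "nat \<Rightarrow> 'a::linorder"
  assumes "0 < M" and "x 0 \<le> t" and "t \<le> x M"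
  shows "\<exists>i<M. x i \<le> t \<and> t \<le> x (Suc i)"
  using assms
proof (induction M)
  case (Suc m)
  show ?case
  proof (cases "0 < m \<and> t \<le> x m")
    case True
    then show ?thesis
      using Suc.IH Suc.prems(2) less_Suc_eq by blast
  next
    case False
    then show ?thesis
      using Suc.prems by (intro exI[of _ m]) auto
  qed
qed simp

text \<open>For u \<in> [0,1) the thresholds interleave with the grid, so this rounds t
  within its cell (see grid_rounding_in_cell); for every u it is monotone with values on the grid,
  which is all the pointwise part of the argument needs.\<close>

definition grid_rounding :: "(nat \<Rightarrow> real) \<Rightarrow> nat \<Rightarrow> real \<Rightarrow> real \<Rightarrow> real" where
  "grid_rounding x M u t = x (card {i. i < M \<and> x i + u * (x (Suc i) - x i) < t})"

text \<open>F is arbitrary, so measurability must come from the rounding index alone.\<close>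

lemma grid_rounding_measurable:
  "(\<lambda>u. F (grid_rounding x M u t)) \<in> borel_measurable (uniform_measure lborel A)"
proof -
  have "grid_rounding x M u t = x (\<Sum>i<M. of_bool (x i + u * (x (Suc i) - x i) < t))" for u
  proof -
    have "{i. i < M \<and> x i + u * (x (Suc i) - x i) < t} = {..<M} \<inter> {i. x i + u * (x (Suc i) - x i) < t}"
      by auto
    then show ?thesis
      unfolding grid_rounding_def by (simp add: sum_of_bool_eq)
  qed
  then show ?thesis
    by simp measurable
qed

lemma grid_rounding_in_grid: "grid_rounding x M u t \<in> x ` {..M}"
proof -
  have "card {i. i < M \<and> x i + u * (x (Suc i) - x i) < t} \<le> card {..<M}"
    by (intro card_mono) auto
  then show ?thesis
    unfolding grid_rounding_def by simp
qed

lemma grid_rounding_bounded: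
  fixes F :: "real \<Rightarrow> real"
  shows "\<bar>F (grid_rounding x M u t)\<bar> \<le> (\<Sum>i\<le>M. \<bar>F (x i)\<bar>)"
proof -
  obtain k where "k \<le> M" "grid_rounding x M u t = x k"
    using grid_rounding_in_grid by blast
  then show ?thesis
    using member_le_sum[of k "{..M}" "\<lambda>i. \<bar>F (x i)\<bar>"] by simp
qed

locale unit_partition =
  fixes x :: "nat \<Rightarrow> real" and M :: nat
  assumes start: "x 0 = 0" and stop: "x M = 1"
    and increasing: "\<And>i. i < M \<Longrightarrow> x i < x (Suc i)"
begin

lemma partition_mono: "i \<le> j \<Longrightarrow> j \<le> M \<Longrightarrow> x i \<le> x j"
proof (induction j)
  case (Suc j)
  then show ?case
    using increasing[of j] by (cases "i = Suc j") auto
qed simp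

lemma partition_in_unit: "i \<le> M \<Longrightarrow> x i \<in> {0..1}"
  using partition_mono[of 0 i] partition_mono[of i M] start stop by auto

lemma grid_rounding_mono: "mono (grid_rounding x M u)"
proof (rule monoI)
  fix s t :: real
  assume "s \<le> t"
  then have "card {i. i < M \<and> x i + u * (x (Suc i) - x i) < s}
      \<le> card {i. i < M \<and> x i + u * (x (Suc i) - x i) < t}"
    by (intro card_mono) auto
  moreover have "card {i. i < M \<and> x i + u * (x (Suc i) - x i) < t} \<le> card {..<M}"
    by (intro card_mono) auto
  ultimately show "grid_rounding x M u s \<le> grid_rounding x M u t"
    unfolding grid_rounding_def by (intro partition_mono) auto
qed

lemma grid_rounding_in_cell:
  assumes i: "i < M" and t: "x i \<le> t" "t \<le> x (Suc i)" and u: "u \<in> {0..<1}"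
  shows "grid_rounding x M u t = (if u < (t - x i) / (x (Suc i) - x i) then x (Suc i) else x i)"
proof -
  have below: "x j + u * (x (Suc j) - x j) < t" if "j < i" for j
  proof -
    have "u * (x (Suc j) - x j) < x (Suc j) - x j"
      using u increasing[of j] that i by simp
    also have "x (Suc j) \<le> t"
      using partition_mono[of "Suc j" i] that i t by simp
    finally show ?thesis by simp
  qed
  have above: "\<not> x j + u * (x (Suc j) - x j) < t" if "i < j" "j < M" for j
  proof -
    have "0 \<le> u * (x (Suc j) - x j)"
      using increasing[of j] u that by simp
    then show ?thesis
      using partition_mono[of "Suc i" j] that t by simp
  qed
  have at_i: "x i + u * (x (Suc i) - x i) < t \<longleftrightarrow> u < (t - x i) / (x (Suc i) - x i)"
    using increasing[OF i] by (simp add: pos_less_divide_eq algebra_simps)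
  have "{j. j < M \<and> x j + u * (x (Suc j) - x j) < t}
      = (if u < (t - x i) / (x (Suc i) - x i) then {..<Suc i} else {..<i})"
    using below above at_i i by (auto simp: less_Suc_eq) (metis linorder_neqE_nat)+
  then show ?thesis
    unfolding grid_rounding_def by simp
qed

lemma grid_rounding_expectation:
  assumes i: "i < M" and t: "x i \<le> t" "t \<le> x (Suc i)"
  shows "(\<integral>u. F (grid_rounding x M u t) \<partial>uniform_measure lborel {0..<1})
    = F (x i) + (t - x i) / (x (Suc i) - x i) * (F (x (Suc i)) - F (x i))"
proof -
  define l where "l = (t - x i) / (x (Suc i) - x i)"
  have "l \<in> {0..1}"
    using increasing[OF i] t by (auto simp: l_def divide_simps)
  have "AE u in uniform_measure lborel {0..<1}.
      F (grid_rounding x M u t) = (if u < l then F (x (Suc i)) else F (x i))"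
    by (intro AE_uniform_measureI AE_I2) (auto simp: grid_rounding_in_cell[OF i t] l_def)
  then have "(\<integral>u. F (grid_rounding x M u t) \<partial>uniform_measure lborel {0..<1})
      = (\<integral>u. (if u < l then F (x (Suc i)) else F (x i)) \<partial>uniform_measure lborel {0..<1})"
    by (intro integral_cong_AE grid_rounding_measurable) simp_all
  also have "\<dots> = F (x i) + (F (x (Suc i)) - F (x i)) * l"
    using \<open>l \<in> {0..1}\<close> by (rule integral_uniform_step)
  finally show ?thesis
    by (simp add: l_def)
qed

lemma interpolant_eq_expectation:
  assumes g: "\<forall>i<M. \<forall>t \<in> {x i..x (Suc i)}.
      g t = f (x i) + (t - x i) / (x (Suc i) - x i) * (f (x (Suc i)) - f (x i))"
    and "t \<in> {0..1}"
  shows "g t = (\<integral>u. f (grid_rounding x M u t) \<partial>uniform_measure lborel {0..<1})"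
proof -
  have "0 < M"
    using start stop by (cases M) auto
  then obtain i where "i < M" "x i \<le> t" "t \<le> x (Suc i)"
    using ex_cell_containing[of M x t] start stop \<open>t \<in> {0..1}\<close> by auto
  then show ?thesis
    using g by (simp add: grid_rounding_expectation)
qed

lemma pvar_sum_rounded_le_upsilon:
  assumes "nonoverlapping n a b"
  shows "ereal (pvar_sum p (f \<circ> grid_rounding x M u) n a b) \<le> upsilon p M f"
  using grid_rounding_mono grid_rounding_in_grid partition_in_unit card_image_le[of "{..M}" x]
  by (intro pvar_sum_comp_monotone_le_upsilon[OF assms, where G="x ` {..M}"])
    (auto intro: mono_imp_mono_on)

lemma pvar_sum_interpolant_le:
  assumes "1 \<le> p"
    and g: "\<forall>i<M. \<forall>t \<in> {x i..x (Suc i)}.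
      g t = f (x i) + (t - x i) / (x (Suc i) - x i) * (f (x (Suc i)) - f (x i))"
    and nov: "nonoverlapping n a b"
    and rounded: "\<And>u. pvar_sum p (f \<circ> grid_rounding x M u) n a b \<le> V"
  shows "pvar_sum p g n a b \<le> V"
proof (rule pvar_sum_expectation_le[where P="uniform_measure lborel {0..<1}" and T="{0..1}"
      and h="\<lambda>u. f \<circ> grid_rounding x M u" and C="\<Sum>i\<le>M. \<bar>f (x i)\<bar>"])
  show "prob_space (uniform_measure lborel {0..<1::real})"
    by (intro prob_space_uniform_measure) auto
  show "a j \<in> {0..1} \<and> b j \<in> {0..1}" if "j < n" for j
    using nonoverlappingD(1)[OF nov that] by simp
  show "g t = (\<integral>u. (f \<circ> grid_rounding x M u) t \<partial>uniform_measure lborel {0..<1})"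
    if "t \<in> {0..1}" for t
    using interpolant_eq_expectation[OF g that] by simp
qed (simp_all add: assms(1) rounded grid_rounding_measurable grid_rounding_bounded)

end

theorem lemma4p1:
  fixes p :: real and f g :: "real \<Rightarrow> real" and x :: "nat \<Rightarrow> real" and M :: nat
  assumes "1 \<le> p"
    and "x 0 = 0" and "x M = 1"
    and "\<forall>i<M. x i < x (Suc i)"
    and "\<forall>i<M. \<forall>t \<in> {x i..x (Suc i)}.
           g t = f (x i) + (t - x i) / (x (Suc i) - x i) * (f (x (Suc i)) - f (x i))"
  shows "Var_p p g \<le> upsilon p M f"
  unfolding Var_p_def
proof (rule SUP_least, clarify)
  interpret unit_partition x M
    using assms(2-4) by unfold_locales auto
  fix n a b
  assume nov: "nonoverlapping n a b"
  note rounded = pvar_sum_rounded_le_upsilon[OF nov, of p f]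
  show "ereal (pvar_sum p g n a b) \<le> upsilon p M f"
  proof (cases "upsilon p M f")
    case (real V)
    then show ?thesis
      using pvar_sum_interpolant_le[OF assms(1,5) nov, of V] rounded by simp
  qed (use rounded[of 0] in auto)
qed

end
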